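(* Let $b\ge 2$ be even, $n\ge 0$, and put $f_0=b^{b^n}+1$, $f_1=b^{b^{n+1}}+1$. Then $\mathrm{Ap}(SF(b,n),f_0)=\{0,f_1,2f_1,\dots,b^{b^n}f_1\}$, $F(SF(b,n)) = b^{b^n}f_1 - f_0 = b^{(b+1)b^{n}}-1$, and $g(SF(b,n))=\tfrac12\, b^{(b+1)b^{n}}$.
   Context: For an even integer $b\ge2$ and $n\ge0$, $SF(b,n)=\langle\{b^{b^{n+i}}+1:i\in\mathbb{N}\}\rangle$, the submonoid of $(\mathbb{N},+)$ generated by these numbers (a numerical semigroup). $\mathrm{Ap}(S,x)=\{s\in S:s-x\notin S\}$; $F(S)$ is the greatest integer not in $S$; the genus $g(S)$ is the cardinality of $\mathbb{N}\setminus S$. *)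

theory Defs
  imports Main
begin

inductive_set monoid_gen :: "nat set \<Rightarrow> nat set" for A :: "nat set" where
  zero: "0 \<in> monoid_gen A"
| add: "a \<in> A \<Longrightarrow> s \<in> monoid_gen A \<Longrightarrow> a + s \<in> monoid_gen A"

definition SF :: "nat \<Rightarrow> nat \<Rightarrow> nat set" where
  "SF b n = monoid_gen {b ^ (b ^ (n + i)) + 1 | i. True}"

text \<open>Apery set: elements s of S with s - x not in S (s - x taken in the integers).\<close>
definition Apery :: "nat set \<Rightarrow> nat \<Rightarrow> nat set" where
  "Apery S x = {s \<in> S. \<not> (s \<ge> x \<and> s - x \<in> S)}"

definition Frobenius :: "nat set \<Rightarrow> int" where
  "Frobenius S = (GREATEST z. z \<notin> int ` S)"

definition genus :: "nat set \<Rightarrow> nat" where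
  "genus S = card (UNIV - S)"

end

theory Submission
  imports Defs
begin

text \<open>Write \<open>B = b^b^n\<close>, so that the generators are \<open>B^b^i + 1\<close>. Since \<open>B \<equiv> -1\<close> modulo
  \<open>f\<^sub>0 = B + 1\<close> and every exponent \<open>b^i\<close> with \<open>i \<ge> 1\<close> is even, each generator beyond \<open>f\<^sub>0\<close> is
  congruent to \<open>2 \<equiv> f\<^sub>1\<close> and at least \<open>f\<^sub>1\<close>, hence lies in \<open>\<langle>f\<^sub>0, f\<^sub>1\<rangle>\<close>; and \<open>f\<^sub>0\<close> is odd, so
  \<open>f\<^sub>0, f\<^sub>1\<close> are coprime. Thus \<open>SF(b,n)\<close> is a two-generated numerical semigroup, and the
  classical facts for \<open>\<langle>p, q\<rangle>\<close> apply: writing each integer uniquely as \<open>a p + k q\<close> with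
  \<open>0 \<le> k < p\<close>, it is an element iff \<open>a \<ge> 0\<close>; this gives the Apery set \<open>{k q | k < p}\<close> and
  the symmetry \<open>z \<in> S \<longleftrightarrow> pq - p - q - z \<notin> S\<close>, whence the Frobenius number \<open>pq - p - q\<close>
  (Sylvester) and genus \<open>(p - 1)(q - 1)/2\<close>.\<close>

definition monoid_gen2 :: "nat \<Rightarrow> nat \<Rightarrow> nat set" where
  "monoid_gen2 p q = {a * p + k * q | a k. True}"

lemma int_image_monoid_gen2_iff:
  "z \<in> int ` monoid_gen2 p q \<longleftrightarrow> (\<exists>a k :: nat. z = int a * int p + int k * int q)"
  unfolding monoid_gen2_def by force

lemma monoid_gen2_add:
  assumes "x \<in> monoid_gen2 p q" "y \<in> monoid_gen2 p q"
  shows "x + y \<in> monoid_gen2 p q"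
proof -
  obtain a k a' k' where "x = a * p + k * q" "y = a' * p + k' * q"
    using assms unfolding monoid_gen2_def by blast
  then have "x + y = (a + a') * p + (k + k') * q"
    by (simp add: algebra_simps)
  then show ?thesis
    unfolding monoid_gen2_def by blast
qed

lemma monoid_gen_mult_add:
  assumes "x \<in> A" "s \<in> monoid_gen A"
  shows "m * x + s \<in> monoid_gen A"
proof (induction m)
  case (Suc m)
  then show ?case
    using monoid_gen.add[OF assms(1) Suc] by (simp add: add.assoc)
qed (simp add: assms(2))

lemma monoid_gen_eq_monoid_gen2:
  assumes "p \<in> A" "q \<in> A" "A \<subseteq> monoid_gen2 p q"
  shows "monoid_gen A = monoid_gen2 p q"
proof
  show "monoid_gen A \<subseteq> monoid_gen2 p q"
  proof
    fix s assume "s \<in> monoid_gen A"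
    then show "s \<in> monoid_gen2 p q"
    proof (induction rule: monoid_gen.induct)
      case zero
      show ?case unfolding monoid_gen2_def by (intro CollectI exI[of _ 0]) simp
    next
      case (add a s)
      then show ?case using assms(3) monoid_gen2_add by blast
    qed
  qed
  show "monoid_gen2 p q \<subseteq> monoid_gen A"
  proof
    fix s assume "s \<in> monoid_gen2 p q"
    then obtain a k where "s = a * p + (k * q + 0)"
      unfolding monoid_gen2_def by auto
    then show "s \<in> monoid_gen A"
      using monoid_gen_mult_add[OF assms(1) monoid_gen_mult_add[OF assms(2) monoid_gen.zero]]
      by simp
  qed
qed

lemma int_eq_lin_comb_bounded_coeff:
  fixes p q x :: int
  assumes "coprime p q" "0 < p"
  obtains a k where "0 \<le> k" "k < p" "x = a * p + k * q"
proof -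
  obtain u v where uv: "u * q + v * p = 1"
    using bezout_int[of q p] assms(1) by (metis coprime_commute coprime_iff_gcd_eq_1)
  define k where "k = (x * u) mod p"
  define d where "d = (x * u) div p"
  have xu: "x * u = k + p * d"
    unfolding k_def d_def by simp
  have "x = x * (u * q + v * p)"
    using uv by simp
  also have "\<dots> = (x * u) * q + (x * v) * p"
    by (simp add: algebra_simps)
  also have "\<dots> = (d * q + x * v) * p + k * q"
    unfolding xu by (simp add: algebra_simps)
  finally have "x = (d * q + x * v) * p + k * q" .
  moreover have "0 \<le> k" "k < p"
    using assms(2) unfolding k_def by simp_all
  ultimately show ?thesis
    using that by blast
qed

text \<open>With the coefficient of \<open>q\<close> normalised to \<open>[0, p)\<close>, membership is read off the sign of
  the coefficient of \<open>p\<close>: any two representations differ by a multiple of \<open>(q, -p)\<close>.\<close>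
lemma int_mem_monoid_gen2_iff:
  fixes p q :: nat and a k z :: int
  assumes "coprime p q" "0 < p" "0 \<le> k" "k < int p" "z = a * int p + k * int q"
  shows "z \<in> int ` monoid_gen2 p q \<longleftrightarrow> 0 \<le> a"
proof
  assume "0 \<le> a"
  then show "z \<in> int ` monoid_gen2 p q"
    using assms unfolding int_image_monoid_gen2_iff
    by (intro exI[of _ "nat a"] exI[of _ "nat k"]) simp
next
  assume "z \<in> int ` monoid_gen2 p q"
  then obtain a' k' :: nat where "z = int a' * int p + int k' * int q"
    unfolding int_image_monoid_gen2_iff by blast
  then have diff: "(int k' - k) * int q = (a - int a') * int p"
    using assms(5) by (simp add: algebra_simps)
  then have "int p dvd (int k' - k) * int q"
    by (metis dvd_triv_right)
  then obtain t where t: "int k' - k = int p * t"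
    using assms(1) by (auto simp: coprime_dvd_mult_left_iff elim: dvdE)
  have "0 \<le> t"
  proof (rule ccontr)
    assume "\<not> 0 \<le> t"
    then have "int p * t \<le> - int p"
      using mult_left_mono[of t "-1" "int p"] by simp
    then show False
      using t assms(4) by simp
  qed
  have "(a - int a') * int p = (t * int q) * int p"
    using diff t by (simp add: algebra_simps)
  then have "a - int a' = t * int q"
    using assms(2) by simp
  then show "0 \<le> a"
    using \<open>0 \<le> t\<close> zero_le_mult_iff[of t "int q"] by linarith
qed

lemma int_diff_mem_int_image_iff:
  "int s - int p \<in> int ` S \<longleftrightarrow> p \<le> s \<and> s - p \<in> S"
proof
  assume "int s - int p \<in> int ` S"
  then obtain y where "y \<in> S" "int s - int p = int y"
    by blast
  then show "p \<le> s \<and> s - p \<in> S"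
    by (metis add_diff_cancel_left' diff_eq_eq le_add1 of_nat_add of_nat_eq_iff)
next
  assume "p \<le> s \<and> s - p \<in> S"
  then show "int s - int p \<in> int ` S"
    by (metis image_eqI of_nat_diff)
qed

lemma Apery_monoid_gen2:
  assumes "coprime p q" "0 < p"
  shows "Apery (monoid_gen2 p q) p = {k * q | k. k < p}"
proof (intro equalityI subsetI)
  fix s assume "s \<in> Apery (monoid_gen2 p q) p"
  then have s: "int s \<in> int ` monoid_gen2 p q" "int s - int p \<notin> int ` monoid_gen2 p q"
    unfolding Apery_def int_diff_mem_int_image_iff by auto
  have "coprime (int p) (int q)" "0 < int p"
    using assms by simp_all
  then obtain a k where ak: "0 \<le> k" "k < int p" "int s = a * int p + k * int q"
    using int_eq_lin_comb_bounded_coeff by metis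
  have "int s - int p = (a - 1) * int p + k * int q"
    using ak(3) by (simp add: algebra_simps)
  then have "a - 1 < 0"
    using s(2) int_mem_monoid_gen2_iff[OF assms ak(1,2)] by force
  moreover have "0 \<le> a"
    using s(1) int_mem_monoid_gen2_iff[OF assms ak] by blast
  ultimately have "a = 0"
    by simp
  then have "int s = int (nat k * q)"
    using ak by simp
  then have "s = nat k * q"
    by (simp only: of_nat_eq_iff)
  moreover have "nat k < p"
    using ak by simp
  ultimately show "s \<in> {k * q | k. k < p}"
    by blast
next
  fix s assume "s \<in> {k * q | k. k < p}"
  then obtain k where k: "s = k * q" "k < p"
    by blast
  have "s \<in> monoid_gen2 p q"
    unfolding monoid_gen2_def k by (intro CollectI exI[of _ 0] exI[of _ k]) simp
  moreover have "int s - int p \<notin> int ` monoid_gen2 p q"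
    using int_mem_monoid_gen2_iff[OF assms, where a = "- 1" and k = "int k" and z = "int s - int p"] k
    by simp
  ultimately show "s \<in> Apery (monoid_gen2 p q) p"
    unfolding Apery_def int_diff_mem_int_image_iff[symmetric] by simp
qed

definition symmetric_about :: "nat set \<Rightarrow> int \<Rightarrow> bool" where
  "symmetric_about S F \<longleftrightarrow> (\<forall>z. z \<in> int ` S \<longleftrightarrow> F - z \<notin> int ` S)"

lemma symmetric_about_monoid_gen2:
  assumes "coprime p q" "0 < p"
  shows "symmetric_about (monoid_gen2 p q) (int p * int q - int p - int q)"
  unfolding symmetric_about_def
proof
  fix z
  have "coprime (int p) (int q)" "0 < int p"
    using assms by simp_all
  then obtain a k where ak: "0 \<le> k" "k < int p" "z = a * int p + k * int q"
    using int_eq_lin_comb_bounded_coeff by metis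
  have "int p * int q - int p - int q - z = (- 1 - a) * int p + (int p - 1 - k) * int q"
    using ak(3) by (simp add: algebra_simps)
  then show "z \<in> int ` monoid_gen2 p q \<longleftrightarrow>
      int p * int q - int p - int q - z \<notin> int ` monoid_gen2 p q"
    using int_mem_monoid_gen2_iff[OF assms] ak by auto
qed

lemma Frobenius_eq_if_symmetric_about:
  assumes "0 \<in> S" "symmetric_about S F"
  shows "Frobenius S = F"
  unfolding Frobenius_def
proof (rule Greatest_equality)
  show "F \<notin> int ` S"
    using assms unfolding symmetric_about_def by force
next
  fix y assume "y \<notin> int ` S"
  then have "F - y \<in> int ` S"
    using assms(2) unfolding symmetric_about_def by blast
  then show "y \<le> F"
    by auto
qed

text \<open>The reflection \<open>x \<mapsto> N - x\<close> of \<open>{0..N}\<close> exchanges the gaps with the elements below \<open>N\<close>.\<close>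
lemma genus_eq_if_symmetric_about:
  assumes "symmetric_about S (int N)"
  shows "2 * genus S = N + 1"
proof -
  let ?G = "UNIV - S" and ?E = "S \<inter> {0..N}"
  have gap_iff: "x \<notin> S \<longleftrightarrow> int N - int x \<in> int ` S" for x
  proof -
    have "x \<in> S \<longleftrightarrow> int x \<in> int ` S"
      by (simp add: inj_image_mem_iff)
    then show ?thesis
      using assms unfolding symmetric_about_def by blast
  qed
  have gaps_le: "?G \<subseteq> {0..N}"
  proof
    fix x assume "x \<in> ?G"
    then have "int N - int x \<in> int ` S"
      using gap_iff by blast
    then show "x \<in> {0..N}"
      by auto
  qed
  have reflect_iff: "x \<notin> S \<longleftrightarrow> N - x \<in> S" if "x \<le> N" for x
  proof -
    have "int N - int x = int (N - x)"
      using that by simp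
    then have "x \<notin> S \<longleftrightarrow> int (N - x) \<in> int ` S"
      using gap_iff[of x] by argo
    then show ?thesis
      using inj_image_mem_iff[OF inj_of_nat] by blast
  qed
  have "(\<lambda>x. N - x) ` ?G = ?E"
  proof (intro equalityI subsetI)
    fix y assume "y \<in> (\<lambda>x. N - x) ` ?G"
    then obtain x where "x \<notin> S" "y = N - x"
      by blast
    moreover have "x \<le> N"
      using gaps_le \<open>x \<notin> S\<close> by auto
    ultimately show "y \<in> ?E"
      using reflect_iff[of x] by simp
  next
    fix y assume "y \<in> ?E"
    then have "N - y \<in> ?G" "y = N - (N - y)"
      using reflect_iff[of "N - y"] by (simp_all add: diff_diff_cancel)
    then show "y \<in> (\<lambda>x. N - x) ` ?G"
      by blast
  qed
  moreover have "inj_on (\<lambda>x. N - x) ?G"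
  proof (rule inj_onI)
    fix x y assume "x \<in> ?G" "y \<in> ?G" "N - x = N - y"
    moreover have "x \<le> N" "y \<le> N"
      using gaps_le \<open>x \<in> ?G\<close> \<open>y \<in> ?G\<close> by auto
    ultimately show "x = y"
      by simp
  qed
  ultimately have "card ?G = card ?E"
    by (metis card_image)
  moreover have "card ?G + card ?E = N + 1"
  proof -
    have "?G \<union> ?E = {0..N}" "?G \<inter> ?E = {}"
      using gaps_le by auto
    then show ?thesis
      using card_Un_disjoint[of ?G ?E] finite_subset[OF gaps_le] by simp
  qed
  ultimately show ?thesis
    unfolding genus_def by simp
qed

lemma Frobenius_monoid_gen2:
  assumes "coprime p q" "0 < p"
  shows "Frobenius (monoid_gen2 p q) = int p * int q - int p - int q"
proof (rule Frobenius_eq_if_symmetric_about)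
  show "0 \<in> monoid_gen2 p q"
    unfolding monoid_gen2_def by (intro CollectI exI[of _ 0]) simp
qed (rule symmetric_about_monoid_gen2[OF assms])

lemma genus_monoid_gen2:
  assumes "coprime p q" "2 \<le> p" "2 \<le> q"
  shows "2 * genus (monoid_gen2 p q) = (p - 1) * (q - 1)"
proof -
  define N where "N = (p - 1) * (q - 1) - 1"
  have "1 \<le> (p - 1) * (q - 1)"
    using assms(2,3) by (simp add: Suc_le_eq)
  then have N: "N + 1 = (p - 1) * (q - 1)"
    unfolding N_def by linarith
  then have "int N + 1 = (int p - 1) * (int q - 1)"
    using assms(2,3) by (metis of_nat_1 of_nat_add of_nat_diff of_nat_mult one_le_numeral order.trans)
  then have "int N = int p * int q - int p - int q"
    by (simp add: algebra_simps)
  then have "symmetric_about (monoid_gen2 p q) (int N)"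
    using symmetric_about_monoid_gen2[OF assms(1)] assms(2) by simp
  then show ?thesis
    using genus_eq_if_symmetric_about N by simp
qed

lemma pow_even_mod_Suc:
  fixes B e :: nat
  assumes "even e"
  shows "B ^ e mod (B + 1) = 1 mod (B + 1)"
proof -
  have "int B mod (int B + 1) = (-1 + (int B + 1)) mod (int B + 1)"
    by simp
  also have "\<dots> = -1 mod (int B + 1)"
    by (rule mod_add_self2)
  finally have "int B ^ e mod (int B + 1) = (-1) ^ e mod (int B + 1)"
    by (metis power_mod)
  then have "int (B ^ e mod (B + 1)) = int (1 mod (B + 1))"
    using assms by (simp only: of_nat_mod of_nat_power of_nat_add of_nat_1) simp
  then show ?thesis
    by (simp only: of_nat_eq_iff)
qed

lemma Suc_pow_mod_Suc:
  fixes B e :: nat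
  assumes "even e"
  shows "(B ^ e + 1) mod (B + 1) = 2 mod (B + 1)"
  using pow_even_mod_Suc[OF assms, of B] by (metis mod_add_left_eq one_add_one)

lemma coprime_Suc_Suc_pow:
  fixes B e :: nat
  assumes "even B" "even e"
  shows "coprime (B + 1) (B ^ e + 1)"
proof -
  have "coprime (B + 1) 2"
    using assms(1) by simp
  then have "coprime (B + 1) ((B ^ e + 1) mod (B + 1))"
    unfolding Suc_pow_mod_Suc[OF assms(2)] by (simp add: coprime_mod_right_iff)
  then show ?thesis
    by (simp add: coprime_mod_right_iff)
qed

lemma Suc_pow_mem_monoid_gen2:
  fixes B e e' :: nat
  assumes "0 < B" "even e" "even e'" "e' \<le> e"
  shows "B ^ e + 1 \<in> monoid_gen2 (B + 1) (B ^ e' + 1)"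
proof -
  have le: "B ^ e' + 1 \<le> B ^ e + 1"
    using assms(1,4) by (simp add: power_increasing)
  have "(B ^ e + 1) mod (B + 1) = (B ^ e' + 1) mod (B + 1)"
    using Suc_pow_mod_Suc assms(2,3) by presburger
  then obtain c where "B ^ e + 1 - (B ^ e' + 1) = (B + 1) * c"
    using mod_eq_dvd_iff_nat[OF le] by blast
  then have "B ^ e + 1 = c * (B + 1) + 1 * (B ^ e' + 1)"
    using le_add_diff_inverse[OF le] by (simp add: mult.commute)
  then show ?thesis
    unfolding monoid_gen2_def by blast
qed

lemma SF_eq_monoid_gen2:
  fixes b n :: nat
  assumes "even b" "2 \<le> b"
  shows "SF b n = monoid_gen2 (b ^ b ^ n + 1) (b ^ b ^ (n + 1) + 1)"
proof -
  define B where "B = b ^ b ^ n"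
  let ?A = "{b ^ b ^ (n + i) + 1 | i. True}"
  have gen: "b ^ b ^ (n + i) + 1 = B ^ b ^ i + 1" for i
    unfolding B_def by (simp add: power_add power_mult)
  have "0 < B"
    unfolding B_def using assms(2) by simp
  have "B + 1 = b ^ b ^ (n + 0) + 1" "B ^ b + 1 = b ^ b ^ (n + 1) + 1"
    using gen[of 0] gen[of 1] by simp_all
  then have "B + 1 \<in> ?A" "B ^ b + 1 \<in> ?A"
    by blast+
  moreover have "?A \<subseteq> monoid_gen2 (B + 1) (B ^ b + 1)"
  proof clarify
    fix i
    show "b ^ b ^ (n + i) + 1 \<in> monoid_gen2 (B + 1) (B ^ b + 1)"
    proof (cases "i = 0")
      case True
      then show ?thesis
        unfolding gen monoid_gen2_def by (intro CollectI exI[of _ 1] exI[of _ 0]) simp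
    next
      case False
      then have "b ^ 1 \<le> b ^ i" "even (b ^ i)"
        using power_increasing[of 1 i b] assms by simp_all
      then show ?thesis
        unfolding gen using Suc_pow_mem_monoid_gen2[OF \<open>0 < B\<close>] assms(1) by simp
    qed
  qed
  ultimately have "SF b n = monoid_gen2 (B + 1) (B ^ b + 1)"
    unfolding SF_def by (rule monoid_gen_eq_monoid_gen2)
  then show ?thesis
    unfolding B_def by (simp add: power_mult[symmetric] mult.commute)
qed

theorem mainTheorem20:
  fixes b n :: nat
  assumes "even b" and "b \<ge> 2"
  defines "f0 \<equiv> b ^ (b ^ n) + 1"
      and "f1 \<equiv> b ^ (b ^ (n + 1)) + 1"
  shows "Apery (SF b n) f0 = {k * f1 | k. k \<le> b ^ (b ^ n)}
    \<and> Frobenius (SF b n) = int (b ^ (b ^ n) * f1) - int f0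
    \<and> int (b ^ (b ^ n) * f1) - int f0 = int (b ^ ((b + 1) * b ^ n)) - 1
    \<and> 2 * genus (SF b n) = b ^ ((b + 1) * b ^ n)"
proof -
  define B where "B = b ^ b ^ n"
  have "2 \<le> B" "even B"
    unfolding B_def using assms(1,2) power_increasing[of 1 "b ^ n" b] by simp_all
  have f0: "f0 = B + 1" and f1: "f1 = B ^ b + 1"
    unfolding f0_def f1_def B_def by (simp_all add: power_mult[symmetric] mult.commute)
  have "0 < f0"
    unfolding f0 by simp
  have S: "SF b n = monoid_gen2 f0 f1"
    unfolding f0_def f1_def using SF_eq_monoid_gen2[OF assms(1,2)] .
  have coprime: "coprime f0 f1"
    unfolding f0 f1 using coprime_Suc_Suc_pow \<open>even B\<close> assms(1) .
  have power: "b ^ ((b + 1) * b ^ n) = B * B ^ b"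
    unfolding B_def by (simp add: power_mult[symmetric] power_add[symmetric] algebra_simps)
  have "Apery (SF b n) f0 = {k * f1 | k. k \<le> B}"
    unfolding S Apery_monoid_gen2[OF coprime \<open>0 < f0\<close>] using f0 by (auto simp: less_Suc_eq_le)
  moreover have "Frobenius (SF b n) = int (B * f1) - int f0"
    unfolding S Frobenius_monoid_gen2[OF coprime \<open>0 < f0\<close>] using f0 by (simp add: algebra_simps)
  moreover have "int (B * f1) - int f0 = int (b ^ ((b + 1) * b ^ n)) - 1"
    unfolding power f0 f1 by (simp add: algebra_simps)
  moreover have "2 * genus (SF b n) = b ^ ((b + 1) * b ^ n)"
    unfolding S power using genus_monoid_gen2[OF coprime] f0 f1 \<open>2 \<le> B\<close> by simp
  ultimately show ?thesis
    unfolding B_def by blast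
qed

end
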